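(* Let $\hat x=(\dots,x_2,x_1)\in\mathrm{Im}(\Psi^+)$ satisfy $x_m\le p_m$ for all $m\ge1$, and let $k\ge1$. The following are equivalent: (1) $c'_{2l+i_k}(x_{k+1}-p_{k+1})-c'_{2l+i_k-1}(x_k-p_k)\le0$ for all $l\ge1$; (2) $\gamma_{k+1}p_{k+1}-p_k+x_k-\gamma_{k+1}x_{k+1}\ge0$.
   Context: Let $a_1,a_2\in\mathbb Z_{\ge1}$ with $a_1a_2>4$, $A=\begin{pmatrix}2&-a_1\\-a_2&2\end{pmatrix}$, $\mathfrak g=\mathfrak g(A)$ with simple roots $\alpha_1,\alpha_2$, coroots $\alpha_i^\vee$, fundamental weights $\Lambda_1,\Lambda_2$. For $k\in\mathbb Z$, $i_k=1$ if $k$ odd, $i_k=2$ if $k$ even (so $i_k\in\{1,2\}$ is also used as an integer). $\mathbb Z^{+\infty}_{\ge0}$ is the set of sequences $(\dots,x_2,x_1)$ of nonnegative integers, almost all zero, with the Nakashima–Zelevinsky crystal structure for the sequence $(\dots,i_2,i_1)$, and $\Psi^+:\mathcal B(\infty)\hookrightarrow\mathbb Z^{+\infty}_{\ge0}$ the corresponding crystal embedding of the crystal basis of $U_q^-(\mathfrak g)$ (sending the highest element to the zero sequence). Put $\alpha=\frac{a_1a_2+\sqrt{a_1^2a_2^2-4a_1a_2}}{2a_2}$, $\beta=\frac{a_1a_2+\sqrt{a_1^2a_2^2-4a_1a_2}}{2a_1}$, $\gamma_k=\alpha$ ($k$ even), $\beta$ ($k$ odd). Fix $\lambda=k_1\Lambda_1-k_2\Lambda_2$,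 $k_1,k_2\in\mathbb Z_{>0}$, with: if $a_1,a_2\ge2$, $k_2\le k_1<(a_1-1)k_2$ or $k_1<k_2\le(a_2-1)k_1$; if $a_1=1$, $2k_1\le k_2\le(a_2-2)k_1$; if $a_2=1$, $2k_2\le k_1\le(a_1-2)k_2$. Let $p_0=k_2$, $p_1=k_1$, $p_{m+2}=a_2p_{m+1}-p_m$ ($m\ge0$ even), $p_{m+2}=a_1p_{m+1}-p_m$ ($m\ge0$ odd). Define $c'_0=0$, $c'_1=1$, $c'_{j+2}=a_2c'_{j+1}-c'_j$ ($j$ even), $c'_{j+2}=a_1c'_{j+1}-c'_j$ ($j$ odd). *)

theory Defs
  imports Complex_Main
begin

definition ik :: "nat \<Rightarrow> nat" where
  "ik k = (if odd k then 1 else 2)"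

text \<open>Generalized Cartan matrix A = [[2,-a1],[-a2,2]], entry A_{ij} = <h_i, alpha_j>.\<close>
definition cartan :: "int \<Rightarrow> int \<Rightarrow> nat \<Rightarrow> nat \<Rightarrow> int" where
  "cartan a1 a2 i j =
     (if i = j then 2 else if i = 1 then - a1 else - a2)"

text \<open>Nakashima--Zelevinsky crystal structure on Z^{+infinity}_{>=0} for the sequence
  (..., i_2, i_1).  Sequences are functions x :: nat => int, where x k is the k-th
  entry (k >= 1); entry 0 is unused.\<close>
definition sigma :: "int \<Rightarrow> int \<Rightarrow> nat \<Rightarrow> (nat \<Rightarrow> int) \<Rightarrow> int" where
  "sigma a1 a2 k x =
     x k + (\<Sum>j\<in>{j. k < j \<and> x j \<noteq> 0}. cartan a1 a2 (ik k) (ik j) * x j)"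

definition sigma_max :: "int \<Rightarrow> int \<Rightarrow> nat \<Rightarrow> (nat \<Rightarrow> int) \<Rightarrow> int" where
  "sigma_max a1 a2 i x = Max {sigma a1 a2 k x | k. 1 \<le> k \<and> ik k = i}"

definition m_f :: "int \<Rightarrow> int \<Rightarrow> nat \<Rightarrow> (nat \<Rightarrow> int) \<Rightarrow> nat" where
  "m_f a1 a2 i x =
     (LEAST k. 1 \<le> k \<and> ik k = i \<and> sigma a1 a2 k x = sigma_max a1 a2 i x)"

definition ftilde :: "int \<Rightarrow> int \<Rightarrow> nat \<Rightarrow> (nat \<Rightarrow> int) \<Rightarrow> (nat \<Rightarrow> int)" where
  "ftilde a1 a2 i x = x(m_f a1 a2 i x := x (m_f a1 a2 i x) + 1)"

text \<open>Image of the embedding Psi^+ : B(infinity) -> Z^{+infinity}_{>=0}: since Psi^+ is a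
  strict crystal embedding sending u_infinity to the zero sequence and B(infinity) is
  generated from u_infinity by the Kashiwara operators f_i, its image is the set of
  sequences obtained from the zero sequence by repeatedly applying the NZ operators f_i.\<close>
inductive_set ImPsi :: "int \<Rightarrow> int \<Rightarrow> (nat \<Rightarrow> int) set" for a1 a2 where
  zero: "(\<lambda>_. 0) \<in> ImPsi a1 a2"
| step: "x \<in> ImPsi a1 a2 \<Longrightarrow> i \<in> {1, 2} \<Longrightarrow> ftilde a1 a2 i x \<in> ImPsi a1 a2"

definition alpha :: "int \<Rightarrow> int \<Rightarrow> real" where
  "alpha a1 a2 = (a1 * a2 + sqrt (a1^2 * a2^2 - 4 * a1 * a2)) / (2 * a2)"

definition beta :: "int \<Rightarrow> int \<Rightarrow> real" where
  "beta a1 a2 = (a1 * a2 + sqrt (a1^2 * a2^2 - 4 * a1 * a2)) / (2 * a1)"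

definition gamma :: "int \<Rightarrow> int \<Rightarrow> nat \<Rightarrow> real" where
  "gamma a1 a2 k = (if even k then alpha a1 a2 else beta a1 a2)"

fun pseq :: "int \<Rightarrow> int \<Rightarrow> int \<Rightarrow> int \<Rightarrow> nat \<Rightarrow> int" where
  "pseq a1 a2 k1 k2 0 = k2"
| "pseq a1 a2 k1 k2 (Suc 0) = k1"
| "pseq a1 a2 k1 k2 (Suc (Suc m)) =
     (if even m then a2 else a1) * pseq a1 a2 k1 k2 (Suc m) - pseq a1 a2 k1 k2 m"

fun cprime :: "int \<Rightarrow> int \<Rightarrow> nat \<Rightarrow> int" where
  "cprime a1 a2 0 = 0"
| "cprime a1 a2 (Suc 0) = 1"
| "cprime a1 a2 (Suc (Suc j)) =
     (if even j then a2 else a1) * cprime a1 a2 (Suc j) - cprime a1 a2 j"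

end

theory Submission
  imports Defs
begin

(* The two-step transfer matrix of the recurrence for c' has trace a1 a2 - 2 and determinant 1,
   so its eigenvalues are 1/mu > 1 > mu > 0 with mu = mu (a1 a2) below.  This yields
   c'_(2l+i_k) = gamma_(k+1) c'_(2l+i_k-1) + e_l with errors e_l >= 0 of order mu^l, and c'_j > 0
   for j > 0.  With u = p_(k+1) - x_(k+1) >= 0 and v = p_k - x_k, condition (1) says
   v <= (c'_(2l+i_k) / c'_(2l+i_k-1)) u for all l >= 1; these ratios are >= gamma_(k+1) and tend to
   it, so (1) is equivalent to v <= gamma_(k+1) u, which is (2). *)

lemma all_le_iff_le_limit_slope:
  fixes A e :: "nat \<Rightarrow> real"
  assumes A: "\<forall>l\<ge>N. 1 \<le> A l" and e: "\<forall>l. 0 \<le> e l" "e \<longlonglongrightarrow> 0" and u: "0 \<le> u"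
  shows "(\<forall>l\<ge>N. A l * v \<le> (g * A l + e l) * u) \<longleftrightarrow> v \<le> g * u"
proof
  assume all: "\<forall>l\<ge>N. A l * v \<le> (g * A l + e l) * u"
  have bound: "v \<le> g * u + e l * u" if "N \<le> l" for l
  proof -
    have "A l * v \<le> A l * (g * u) + e l * u"
      using all that by (simp add: algebra_simps)
    also have "\<dots> \<le> A l * (g * u + e l * u)"
      using A that mult_right_mono[of 1 "A l" "e l * u"] e(1) u by (simp add: distrib_left)
    finally show ?thesis
      by (rule mult_left_le_imp_le) (use A that in fastforce)
  qed
  show "v \<le> g * u"
  proof (rule LIMSEQ_le_const)
    show "(\<lambda>l. g * u + e l * u) \<longlonglongrightarrow> g * u"
      using e(2) by (auto intro!: tendsto_eq_intros)
    show "\<exists>N'. \<forall>l\<ge>N'. v \<le> g * u + e l * u"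
      using bound by blast
  qed
next
  assume "v \<le> g * u"
  show "\<forall>l\<ge>N. A l * v \<le> (g * A l + e l) * u"
  proof (intro allI impI)
    fix l
    assume "N \<le> l"
    then have "A l * v \<le> A l * (g * u)"
      using A \<open>v \<le> g * u\<close> by (intro mult_left_mono) auto
    also have "\<dots> \<le> (g * A l + e l) * u"
      using e(1) u by (simp add: algebra_simps)
    finally show "A l * v \<le> (g * A l + e l) * u" .
  qed
qed

definition mu :: "real \<Rightarrow> real" where
  "mu P = (P - 2 - sqrt (P\<^sup>2 - 4 * P)) / 2"

lemma sqrt_discriminant_bounds:
  fixes P :: real
  assumes "4 < P"
  shows "P - 4 < sqrt (P\<^sup>2 - 4 * P)" "sqrt (P\<^sup>2 - 4 * P) < P - 2"
proof -
  have "sqrt ((P - 4)\<^sup>2) < sqrt (P\<^sup>2 - 4 * P)"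
    using assms by (intro real_sqrt_less_mono) (simp add: power2_eq_square algebra_simps)
  then show "P - 4 < sqrt (P\<^sup>2 - 4 * P)"
    using assms by simp
  have "sqrt (P\<^sup>2 - 4 * P) < sqrt ((P - 2)\<^sup>2)"
    by (intro real_sqrt_less_mono) (simp add: power2_eq_square algebra_simps)
  then show "sqrt (P\<^sup>2 - 4 * P) < P - 2"
    using assms by simp
qed

lemma mu_gt_0: "4 < P \<Longrightarrow> 0 < mu P"
  using sqrt_discriminant_bounds(2)[of P] by (simp add: mu_def)

lemma mu_less_1: "4 < P \<Longrightarrow> mu P < 1"
  using sqrt_discriminant_bounds(1)[of P] by (simp add: mu_def)

lemma one_plus_mu_squared:
  assumes "4 \<le> P"
  shows "(1 + mu P)\<^sup>2 = P * mu P"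
proof -
  have "0 \<le> P\<^sup>2 - 4 * P"
    using assms by (simp add: power2_eq_square)
  then have "(sqrt (P\<^sup>2 - 4 * P))\<^sup>2 = P\<^sup>2 - 4 * P"
    by simp
  then show ?thesis
    by (simp add: mu_def power2_eq_square field_simps)
qed

lemma mu_of_int_product:
  fixes a1 a2 :: int
  assumes "4 < a1 * a2"
  defines "\<mu> \<equiv> mu (of_int a1 * of_int a2)"
  shows "0 < \<mu>" "\<mu> < 1" "(1 + \<mu>)\<^sup>2 = of_int a1 * of_int a2 * \<mu>"
proof -
  have P: "4 < real_of_int a1 * of_int a2"
    using assms(1) by (metis of_int_less_iff of_int_mult of_int_numeral)
  show "0 < \<mu>" "\<mu> < 1" "(1 + \<mu>)\<^sup>2 = of_int a1 * of_int a2 * \<mu>"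
    using mu_gt_0[OF P] mu_less_1[OF P] one_plus_mu_squared[of "of_int a1 * of_int a2"] P
    unfolding \<mu>_def by simp_all
qed

lemma alpha_beta_eq_mu:
  fixes a1 a2 :: int
  assumes "4 < a1 * a2"
  defines "\<mu> \<equiv> mu (of_int a1 * of_int a2)"
  shows "alpha a1 a2 = a1 / (1 + \<mu>)" "beta a1 a2 = a2 / (1 + \<mu>)"
proof -
  define P where "P = real_of_int a1 * a2"
  define s where "s = sqrt (P\<^sup>2 - 4 * P)"
  have P: "4 < P"
    using assms unfolding P_def by (metis of_int_less_iff of_int_mult of_int_numeral)
  have s2: "s\<^sup>2 = P\<^sup>2 - 4 * P"
    using P unfolding s_def by (simp add: power2_eq_square)
  have "s < P"
    using sqrt_discriminant_bounds(2)[OF P] unfolding s_def by simp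
  have mu: "1 + \<mu> = (P - s) / 2"
    unfolding \<mu>_def mu_def P_def s_def by (simp add: field_simps)
  have "a1 \<noteq> 0" "a2 \<noteq> 0"
    using assms by auto
  have "(P + s) * (P - s) = 4 * a1 * a2"
    using s2 unfolding P_def by (simp add: power2_eq_square algebra_simps)
  then show "alpha a1 a2 = a1 / (1 + \<mu>)" "beta a1 a2 = a2 / (1 + \<mu>)"
    using \<open>s < P\<close> \<open>a1 \<noteq> 0\<close> \<open>a2 \<noteq> 0\<close>
    unfolding alpha_def beta_def mu s_def P_def
    by (simp_all add: power_mult_distrib field_simps)
qed

lemma cprime_even_step:
  "cprime a1 a2 (2 * l + 2) = a2 * cprime a1 a2 (2 * l + 1) - cprime a1 a2 (2 * l)"
proof -
  have "2 * l + 2 = Suc (Suc (2 * l))" "2 * l + 1 = Suc (2 * l)"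
    by simp_all
  then show ?thesis
    by (simp only: cprime.simps(3)) simp
qed

lemma cprime_odd_step:
  "cprime a1 a2 (2 * l + 3) = a1 * cprime a1 a2 (2 * l + 2) - cprime a1 a2 (2 * l + 1)"
proof -
  have "2 * l + 3 = Suc (Suc (2 * l + 1))" "2 * l + 2 = Suc (2 * l + 1)"
    by simp_all
  then show ?thesis
    by (simp only: cprime.simps(3)) simp
qed

lemma cprime_odd_eq:
  fixes \<mu> :: real
  assumes quadratic: "(1 + \<mu>)\<^sup>2 = a1 * a2 * \<mu>" and nonzero: "1 + \<mu> \<noteq> 0"
  shows "cprime a1 a2 (2 * l + 1) = a1 / (1 + \<mu>) * cprime a1 a2 (2 * l) + \<mu> ^ l"
proof (induction l)
  case 0
  show ?case by simp
next
  case (Suc l)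
  define \<alpha> where "\<alpha> = a1 / (1 + \<mu>)"
  define c where "c j = real_of_int (cprime a1 a2 j)" for j
  have a1_minus: "a1 - \<alpha> = \<alpha> * \<mu>"
    using nonzero unfolding \<alpha>_def by (simp add: field_simps)
  have a1_a2: "\<alpha> * \<mu> * a2 = 1 + \<mu>"
    using quadratic nonzero unfolding \<alpha>_def by (simp add: power2_eq_square field_simps)
  have "c (2 * l + 3) - \<alpha> * c (2 * l + 2) = (a1 - \<alpha>) * c (2 * l + 2) - c (2 * l + 1)"
    unfolding c_def cprime_odd_step by (simp add: algebra_simps)
  also have "\<dots> = \<alpha> * \<mu> * (a2 * c (2 * l + 1) - c (2 * l)) - c (2 * l + 1)"
    unfolding a1_minus c_def cprime_even_step by simp
  also have "\<dots> = (\<alpha> * \<mu> * a2 - 1) * c (2 * l + 1) - \<alpha> * \<mu> * c (2 * l)"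
    by (simp add: algebra_simps)
  also have "\<dots> = \<mu> * (c (2 * l + 1) - \<alpha> * c (2 * l))"
    unfolding a1_a2 by (simp add: algebra_simps)
  also have "\<dots> = \<mu> ^ Suc l"
    using Suc.IH unfolding c_def \<alpha>_def by simp
  finally have step: "c (2 * l + 3) - \<alpha> * c (2 * l + 2) = \<mu> ^ Suc l" .
  have index: "2 * Suc l + 1 = 2 * l + 3" "2 * Suc l = 2 * l + 2"
    by simp_all
  show ?case
    unfolding index(1) unfolding index(2) using step unfolding c_def \<alpha>_def by linarith
qed

lemma cprime_even_eq:
  fixes \<mu> :: real
  assumes quadratic: "(1 + \<mu>)\<^sup>2 = a1 * a2 * \<mu>" and nonzero: "1 + \<mu> \<noteq> 0"
  shows "cprime a1 a2 (2 * l + 2)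
           = a2 / (1 + \<mu>) * cprime a1 a2 (2 * l + 1) + a2 / (1 + \<mu>) * \<mu> ^ (l + 1)"
proof -
  define \<alpha> where "\<alpha> = a1 / (1 + \<mu>)"
  define \<beta> where "\<beta> = a2 / (1 + \<mu>)"
  define c where "c j = real_of_int (cprime a1 a2 j)" for j
  have a2_minus: "a2 - \<beta> = \<beta> * \<mu>"
    using nonzero unfolding \<beta>_def by (simp add: field_simps)
  have "\<alpha> * \<beta> * \<mu> = of_int a1 * of_int a2 * \<mu> / (1 + \<mu>)\<^sup>2"
    unfolding \<alpha>_def \<beta>_def by (simp add: power2_eq_square)
  also have "\<dots> = (1 + \<mu>)\<^sup>2 / (1 + \<mu>)\<^sup>2"
    by (simp only: quadratic)
  also have "\<dots> = 1"
    using nonzero by simp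
  finally have product: "\<alpha> * \<beta> * \<mu> = 1" .
  have odd: "c (2 * l + 1) = \<alpha> * c (2 * l) + \<mu> ^ l"
    using cprime_odd_eq[OF quadratic nonzero] unfolding c_def \<alpha>_def .
  have "c (2 * l + 2) - \<beta> * c (2 * l + 1) = \<beta> * \<mu> * c (2 * l + 1) - c (2 * l)"
    using a2_minus unfolding c_def cprime_even_step by (simp add: algebra_simps)
  also have "\<dots> = (\<alpha> * \<beta> * \<mu> - 1) * c (2 * l) + \<beta> * \<mu> ^ (l + 1)"
    unfolding odd by (simp add: algebra_simps)
  also have "\<dots> = \<beta> * \<mu> ^ (l + 1)"
    unfolding product by simp
  finally show ?thesis
    unfolding c_def \<beta>_def by linarith
qed

lemma cprime_pos:
  fixes a1 a2 :: int
  assumes "0 < a1" "0 < a2" "4 < a1 * a2" "0 < j"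
  shows "0 < cprime a1 a2 j"
proof -
  define \<mu> where "\<mu> = mu (of_int a1 * of_int a2)"
  have "0 < \<mu>" and quadratic: "(1 + \<mu>)\<^sup>2 = of_int a1 * of_int a2 * \<mu>"
    using mu_of_int_product[OF assms(3)] unfolding \<mu>_def by simp_all
  then have nonzero: "1 + \<mu> \<noteq> 0"
    by simp
  have "0 < cprime a1 a2 (2 * l + 1) \<and> 0 < cprime a1 a2 (2 * l + 2)" for l
  proof (induction l)
    case 0
    show ?case
      using assms(2) by (simp add: numeral_2_eq_2)
  next
    case (Suc l)
    have "2 * Suc l = 2 * l + 2"
      by simp
    then have "0 < real_of_int (cprime a1 a2 (2 * Suc l))"
      using Suc.IH by (simp del: cprime.simps)
    then have odd: "0 < real_of_int (cprime a1 a2 (2 * Suc l + 1))"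
      unfolding cprime_odd_eq[OF quadratic nonzero]
      using assms(1) \<open>0 < \<mu>\<close> by (simp add: add_pos_nonneg)
    have "0 < real_of_int (cprime a1 a2 (2 * Suc l + 2))"
      unfolding cprime_even_eq[OF quadratic nonzero]
      using odd assms(2) \<open>0 < \<mu>\<close> by (simp add: add_pos_pos)
    then show ?case
      using odd by (simp del: cprime.simps)
  qed
  moreover have "\<exists>l. j = 2 * l + 1 \<or> j = 2 * l + 2"
  proof (cases "even j")
    case True
    then obtain m where "j = 2 * m"
      by blast
    with \<open>0 < j\<close> show ?thesis
      by (intro exI[of _ "m - 1"]) auto
  next
    case False
    then show ?thesis
      by (metis oddE)
  qed
  ultimately show ?thesis
    by blast
qed

lemma cprime_ik_asymptotics:
  fixes a1 a2 :: int
  assumes "0 < a1" "0 < a2" "4 < a1 * a2"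
  obtains e :: "nat \<Rightarrow> real" where "\<forall>l. 0 \<le> e l" "e \<longlonglongrightarrow> 0"
    "\<forall>l. cprime a1 a2 (2 * l + ik k) = gamma a1 a2 (k + 1) * cprime a1 a2 (2 * l + ik k - 1) + e l"
proof -
  define \<mu> where "\<mu> = mu (of_int a1 * of_int a2)"
  have "0 < \<mu>" "\<mu> < 1" and quadratic: "(1 + \<mu>)\<^sup>2 = of_int a1 * of_int a2 * \<mu>"
    using mu_of_int_product[OF assms(3)] unfolding \<mu>_def by simp_all
  then have nonzero: "1 + \<mu> \<noteq> 0"
    by simp
  have power_lim: "(\<lambda>l. \<mu> ^ l) \<longlonglongrightarrow> 0"
    using \<open>0 < \<mu>\<close> \<open>\<mu> < 1\<close> by (intro LIMSEQ_power_zero) simp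
  show thesis
  proof (cases "odd k")
    case True
    have "gamma a1 a2 (k + 1) = a1 / (1 + \<mu>)" "ik k = 1"
      using True alpha_beta_eq_mu(1)[OF assms(3)] unfolding gamma_def ik_def \<mu>_def by simp_all
    then show thesis
      using that[of "\<lambda>l. \<mu> ^ l"] cprime_odd_eq[OF quadratic nonzero] power_lim \<open>0 < \<mu>\<close> by simp
  next
    case False
    have "gamma a1 a2 (k + 1) = a2 / (1 + \<mu>)" "ik k = 2"
      using False alpha_beta_eq_mu(2)[OF assms(3)] unfolding gamma_def ik_def \<mu>_def by simp_all
    moreover have "(\<lambda>l. a2 / (1 + \<mu>) * \<mu> * \<mu> ^ l) \<longlonglongrightarrow> 0"
      using power_lim by (rule tendsto_mult_right_zero)
    ultimately show thesis
      using that[of "\<lambda>l. a2 / (1 + \<mu>) * \<mu> * \<mu> ^ l"] cprime_even_eq[OF quadratic nonzero]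
        assms(2) \<open>0 < \<mu>\<close> by (simp add: mult.assoc)
  qed
qed

lemma cprime_ratio_criterion:
  fixes a1 a2 u v :: int
  assumes "0 < a1" "0 < a2" "4 < a1 * a2" "0 \<le> u"
  shows "(\<forall>l\<ge>1. cprime a1 a2 (2 * l + ik k - 1) * v \<le> cprime a1 a2 (2 * l + ik k) * u)
           \<longleftrightarrow> v \<le> gamma a1 a2 (k + 1) * u"
proof -
  obtain e :: "nat \<Rightarrow> real" where "\<forall>l. 0 \<le> e l" "e \<longlonglongrightarrow> 0"
    and cprime_eq: "\<forall>l. cprime a1 a2 (2 * l + ik k)
                          = gamma a1 a2 (k + 1) * cprime a1 a2 (2 * l + ik k - 1) + e l"
    using cprime_ik_asymptotics[OF assms(1-3)] by blast
  define c where "c l = real_of_int (cprime a1 a2 (2 * l + ik k - 1))" for l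
  have "\<forall>l\<ge>1. 1 \<le> c l"
    using cprime_pos[OF assms(1-3)] unfolding c_def ik_def by (simp add: int_one_le_iff_zero_less)
  then have "(\<forall>l\<ge>1. c l * v \<le> (gamma a1 a2 (k + 1) * c l + e l) * u)
               \<longleftrightarrow> v \<le> gamma a1 a2 (k + 1) * u"
    using all_le_iff_le_limit_slope \<open>\<forall>l. 0 \<le> e l\<close> \<open>e \<longlonglongrightarrow> 0\<close> assms(4) by simp
  moreover have "cprime a1 a2 (2 * l + ik k - 1) * v \<le> cprime a1 a2 (2 * l + ik k) * u
                   \<longleftrightarrow> c l * v \<le> (gamma a1 a2 (k + 1) * c l + e l) * u" for l
  proof -
    have "cprime a1 a2 (2 * l + ik k - 1) * v \<le> cprime a1 a2 (2 * l + ik k) * u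
            \<longleftrightarrow> c l * v \<le> real_of_int (cprime a1 a2 (2 * l + ik k)) * u"
      unfolding c_def by (simp only: of_int_mult[symmetric] of_int_le_iff)
    then show ?thesis
      using cprime_eq unfolding c_def by simp
  qed
  ultimately show ?thesis
    by simp
qed

theorem proposition4p6:
  fixes a1 a2 k1 k2 :: int and x :: "nat \<Rightarrow> int" and k :: nat
  assumes a1: "a1 \<ge> 1" and a2: "a2 \<ge> 1" and a12: "a1 * a2 > 4"
    and k1: "k1 > 0" and k2: "k2 > 0"
    and lam_both: "a1 \<ge> 2 \<and> a2 \<ge> 2 \<Longrightarrow>
                     (k2 \<le> k1 \<and> k1 < (a1 - 1) * k2) \<or> (k1 < k2 \<and> k2 \<le> (a2 - 1) * k1)"
    and lam_a1: "a1 = 1 \<Longrightarrow> 2 * k1 \<le> k2 \<and> k2 \<le> (a2 - 2) * k1"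
    and lam_a2: "a2 = 1 \<Longrightarrow> 2 * k2 \<le> k1 \<and> k1 \<le> (a1 - 2) * k2"
    and xim: "x \<in> ImPsi a1 a2"
    and xle: "\<forall>m\<ge>1. x m \<le> pseq a1 a2 k1 k2 m"
    and k: "k \<ge> 1"
  shows "(\<forall>l\<ge>1. cprime a1 a2 (2 * l + ik k) * (x (k + 1) - pseq a1 a2 k1 k2 (k + 1))
                 - cprime a1 a2 (2 * l + ik k - 1) * (x k - pseq a1 a2 k1 k2 k) \<le> 0)
     \<longleftrightarrow> gamma a1 a2 (k + 1) * pseq a1 a2 k1 k2 (k + 1) - pseq a1 a2 k1 k2 k + x k
           - gamma a1 a2 (k + 1) * x (k + 1) \<ge> 0"
proof -
  define p where "p = pseq a1 a2 k1 k2"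
  have "0 \<le> p (k + 1) - x (k + 1)"
    using xle unfolding p_def by simp
  then have "(\<forall>l\<ge>1. cprime a1 a2 (2 * l + ik k - 1) * (p k - x k)
                      \<le> cprime a1 a2 (2 * l + ik k) * (p (k + 1) - x (k + 1)))
               \<longleftrightarrow> p k - x k \<le> gamma a1 a2 (k + 1) * (p (k + 1) - x (k + 1))"
    using cprime_ratio_criterion a1 a2 a12 by simp
  then show ?thesis
    unfolding p_def[symmetric] by (simp add: algebra_simps)
qed

end
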